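(* Let $S=G_2(q)$, where $q=3^f$ and $f>1$, and let $\phi$ be a field automorphism of $S$ of prime order. Let $r$ be a Zsigmondy prime divisor of $\Phi_2(q)=q+1$, i.e. a prime with the multiplicative order of $3$ modulo $r$ equal to $2f$, and let $R$ be a Sylow $r$-subgroup of $S$. Then $C_{\widehat{A}_0}(R)\le S$.
   Context: $\widehat{A}_0$ denotes the subgroup of $\mathrm{Aut}(S)$ generated by $S$ (identified with $\mathrm{Inn}(S)$) and all field automorphisms of $S$. *)

theory Defs
  imports "HOL-Algebra.Algebra" "HOL-Number_Theory.Number_Theory"
begin

text \<open>Split octonions over a field K, in Zorn vector-matrix form (a, v, w, b),
  with a b in K and v w in K^3.  G_2(q) is the automorphism group of the
  split octonion algebra over GF(q).\<close>

type_synonym 'k vec3 = "'k \<times> 'k \<times> 'k"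
type_synonym 'k oct = "'k \<times> 'k vec3 \<times> 'k vec3 \<times> 'k"

fun v3_add :: "'k::field vec3 \<Rightarrow> 'k vec3 \<Rightarrow> 'k vec3" where
  "v3_add (a1,a2,a3) (b1,b2,b3) = (a1+b1, a2+b2, a3+b3)"

fun v3_smult :: "'k::field \<Rightarrow> 'k vec3 \<Rightarrow> 'k vec3" where
  "v3_smult c (a1,a2,a3) = (c*a1, c*a2, c*a3)"

fun v3_dot :: "'k::field vec3 \<Rightarrow> 'k vec3 \<Rightarrow> 'k" where
  "v3_dot (a1,a2,a3) (b1,b2,b3) = a1*b1 + a2*b2 + a3*b3"

fun v3_cross :: "'k::field vec3 \<Rightarrow> 'k vec3 \<Rightarrow> 'k vec3" where
  "v3_cross (a1,a2,a3) (b1,b2,b3) = (a2*b3 - a3*b2, a3*b1 - a1*b3, a1*b2 - a2*b1)"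

fun v3_map :: "('k \<Rightarrow> 'k) \<Rightarrow> 'k vec3 \<Rightarrow> 'k vec3" where
  "v3_map s (a1,a2,a3) = (s a1, s a2, s a3)"

fun oct_add :: "'k::field oct \<Rightarrow> 'k oct \<Rightarrow> 'k oct" where
  "oct_add (a,v,w,b) (a',v',w',b') = (a+a', v3_add v v', v3_add w w', b+b')"

fun oct_smult :: "'k::field \<Rightarrow> 'k oct \<Rightarrow> 'k oct" where
  "oct_smult c (a,v,w,b) = (c*a, v3_smult c v, v3_smult c w, c*b)"

fun oct_mult :: "'k::field oct \<Rightarrow> 'k oct \<Rightarrow> 'k oct" where
  "oct_mult (a,v,w,b) (a',v',w',b') =
     (a*a' + v3_dot v w',
      v3_add (v3_add (v3_smult a v') (v3_smult b' v)) (v3_smult (-1) (v3_cross w w')),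
      v3_add (v3_add (v3_smult a' w) (v3_smult b w')) (v3_cross v v'),
      v3_dot w v' + b*b')"

definition G2_set :: "('k::field oct \<Rightarrow> 'k oct) set" where
  "G2_set = {g. bij g \<and>
     (\<forall>x y. g (oct_add x y) = oct_add (g x) (g y)) \<and>
     (\<forall>c x. g (oct_smult c x) = oct_smult c (g x)) \<and>
     (\<forall>x y. g (oct_mult x y) = oct_mult (g x) (g y))}"

abbreviation Perm_oct :: "('k::field oct \<Rightarrow> 'k oct) monoid" where
  "Perm_oct \<equiv> BijGroup UNIV"

definition G2 :: "('k::field oct \<Rightarrow> 'k oct) monoid" where
  "G2 = Perm_oct \<lparr>carrier := G2_set\<rparr>"

definition field_aut :: "('k::field \<Rightarrow> 'k) \<Rightarrow> bool" where
  "field_aut s \<longleftrightarrow> bij s \<and> (\<forall>a b. s (a+b) = s a + s b) \<and> (\<forall>a b. s (a*b) = s a * s b)"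

text \<open>Field automorphism of G_2(K) induced by s: conjugation by the
  coordinatewise application of s.\<close>
fun oct_map :: "('k \<Rightarrow> 'k) \<Rightarrow> 'k oct \<Rightarrow> 'k oct" where
  "oct_map s (a,v,w,b) = (s a, v3_map s v, v3_map s w, s b)"

text \<open>A_0-hat: generated by G_2(K) (inner automorphisms) and field automorphisms,
  realised inside the permutation group of the octonions (acting on G_2(K)
  by conjugation; this action is faithful).\<close>
definition A0hat :: "('k::field oct \<Rightarrow> 'k oct) set" where
  "A0hat = generate Perm_oct (G2_set \<union> {oct_map s | s. field_aut s})"

definition centraliser_in :: "('a \<Rightarrow> 'a) set \<Rightarrow> ('a \<Rightarrow> 'a) set \<Rightarrow> ('a \<Rightarrow> 'a) set" where
  "centraliser_in A R = {a \<in> A. \<forall>x \<in> R. a \<circ> x = x \<circ> a}"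

definition sylow_subgroup :: "nat \<Rightarrow> 'a set \<Rightarrow> ('a, 'b) monoid_scheme \<Rightarrow> bool" where
  "sylow_subgroup p P G \<longleftrightarrow> subgroup P G \<and> card P = p ^ multiplicity p (order G)"

end

theory Submission
  imports Defs
begin

(* Every element of A0hat is a ring automorphism of the split octonions that is semilinear with
   respect to some field automorphism s, and it lies in S = G_2(q) exactly when s = id.
   Since r divides q + 1 but not q - 1, the nonsplit torus of SL_2(q) contains an element M of
   order r; SL_2(q) embeds in G_2(q), so some G_2(q)-conjugate of M lies in R.  If a in A0hat
   centralises R, a conjugate of a is an s-semilinear map commuting with M, hence with
   M + M^-1, whose eigenvalues on the octonions are tr M and 2; so s fixes tr M.  But tr M lies
   in no proper subfield: if it lay in GF(3^m), comparing traces would give M^(3^m) = M^(+-1),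
   so r would divide 3^(2m) - 1 and 2f = ord_r 3 would divide 2m.  Hence s = id. *)

section \<open>Periodic points and elements of prime order\<close>

lemma power_gcd_eq_1:
  fixes x :: "'a::monoid_mult"
  assumes "x ^ m = 1" "x ^ n = 1"
  shows "x ^ gcd m n = 1"
proof (cases "m = 0")
  case False
  then obtain u v where uv: "m * u = n * v + gcd m n"
    using bezout_nat by blast
  have "1 = x ^ (m * u)"
    using assms(1) by (simp add: power_mult)
  also have "\<dots> = x ^ (n * v) * x ^ gcd m n"
    by (simp add: uv power_add)
  also have "\<dots> = x ^ gcd m n"
    using assms(2) by (simp add: power_mult)
  finally show ?thesis by simp
qed (use assms in simp)

lemma prime_dvd_if_power_eq_1:
  fixes x :: "'a::monoid_mult"
  assumes "x ^ p = 1" "x ^ k = 1" "x \<noteq> 1" "Factorial_Ring.prime p"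
  shows "p dvd k"
proof (rule ccontr)
  assume "\<not> p dvd k"
  then have "gcd p k = 1"
    using assms(4) by (simp add: prime_imp_coprime_nat)
  then show False
    using power_gcd_eq_1[OF assms(1,2)] assms(3) by simp
qed

lemma funpow_gcd_fixed:
  assumes "(f ^^ m) x = x" "(f ^^ n) x = x"
  shows "(f ^^ gcd m n) x = x"
proof (cases "m = 0")
  case False
  then obtain u v where uv: "m * u = gcd m n + n * v"
    using bezout_nat by (metis add.commute)
  have fixed_mult: "(f ^^ (k * l)) x = x" if "(f ^^ k) x = x" for k l
    using that by (induction l) (simp_all add: funpow_add)
  have "x = (f ^^ (m * u)) x"
    using fixed_mult[OF assms(1)] by simp
  also have "\<dots> = (f ^^ gcd m n) ((f ^^ (n * v)) x)"
    by (simp add: uv funpow_add)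
  also have "\<dots> = (f ^^ gcd m n) x"
    using fixed_mult[OF assms(2)] by simp
  finally show ?thesis by simp
qed (use assms in simp)

lemma inj_on_funpow_prime_period:
  assumes "(f ^^ p) x = x" "Factorial_Ring.prime p" "f x \<noteq> x"
  shows "inj_on (\<lambda>i. (f ^^ i) x) {..<p}"
proof -
  have "(f ^^ i) x \<noteq> (f ^^ j) x" if "i < j" "j < p" for i j
  proof
    assume eq: "(f ^^ i) x = (f ^^ j) x"
    define k where "k = p - (j - i)"
    have "k = (p - j) + i"
      using that by (simp add: k_def)
    then have "(f ^^ k) x = (f ^^ (p - j)) ((f ^^ i) x)"
      by (simp add: funpow_add)
    also have "\<dots> = (f ^^ ((p - j) + j)) x"
      by (simp add: eq funpow_add)
    also have "\<dots> = x"
      using that assms(1) by simp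
    finally have "(f ^^ gcd k p) x = x"
      using funpow_gcd_fixed assms(1) by metis
    moreover have "gcd k p = 1"
      using that assms(2) by (simp add: k_def prime_imp_coprime_nat coprime_commute nat_dvd_not_less)
    ultimately show False
      using assms(3) by simp
  qed
  then show ?thesis
    by (intro inj_onI) (metis lessThan_iff linorder_neqE_nat)
qed

lemma funpow_orbit_closed:
  assumes "(f ^^ p) y = y" "p > 0"
  shows "f ` ((\<lambda>i. (f ^^ i) y) ` {..<p}) \<subseteq> (\<lambda>i. (f ^^ i) y) ` {..<p}"
proof -
  have "f ((f ^^ i) y) = (f ^^ (Suc i mod p)) y" for i
    using assms(1) by (simp add: funpow_mod_eq)
  then show ?thesis
    using assms(2) by auto
qed

lemma not_dvd_card_Diff:
  fixes p :: nat
  assumes "finite Y" "A \<subseteq> Y" "card A = p" "\<not> p dvd card Y"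
  shows "\<not> p dvd card (Y - A)"
proof
  assume "p dvd card (Y - A)"
  moreover have "card (Y - A) = card Y - p"
    using assms(1-3) by (simp add: card_Diff_subset finite_subset)
  moreover have "p \<le> card Y"
    using card_mono[OF assms(1,2)] assms(3) by simp
  ultimately have "p dvd card Y"
    by (simp add: dvd_minus_self)
  with assms(4) show False ..
qed

lemma fixed_point_of_prime_period:
  assumes "finite Y" "f ` Y \<subseteq> Y" "\<And>y. y \<in> Y \<Longrightarrow> (f ^^ p) y = y"
    and "Factorial_Ring.prime p" "\<not> p dvd card Y"
  shows "\<exists>y\<in>Y. f y = y"
  using assms
proof (induction Y rule: finite_psubset_induct)
  case (psubset Y)
  have p: "p > 0"
    using psubset.prems(3) by (rule prime_gt_0_nat)
  have "Y \<noteq> {}"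
    using psubset.prems(4) by auto
  then obtain y where y: "y \<in> Y"
    by blast
  show ?case
  proof (cases "f y = y")
    case False
    define orb where "orb = (\<lambda>i. (f ^^ i) y) ` {..<p}"
    have "card orb = p"
      unfolding orb_def using inj_on_funpow_prime_period[OF psubset.prems(2)[OF y] psubset.prems(3) False]
      by (simp add: card_image)
    have "(f ^^ i) z \<in> Y" if "z \<in> Y" for i z
      using that psubset.prems(1) by (induction i) auto
    then have "orb \<subseteq> Y"
      using y by (auto simp: orb_def)
    have f_orb: "(f ^^ i) z \<in> orb" if "z \<in> orb" for i z
      using that funpow_orbit_closed[OF psubset.prems(2)[OF y] p] by (induction i) (auto simp: orb_def)
    have closed: "f ` (Y - orb) \<subseteq> Y - orb"
    proof
      fix z assume "z \<in> f ` (Y - orb)"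
      then obtain z' where z': "z' \<in> Y" "z' \<notin> orb" "z = f z'" by blast
      have "z' = (f ^^ (p - 1)) z"
        using psubset.prems(2)[OF z'(1)] p by (metis z'(3) Suc_diff_1 comp_apply funpow_Suc_right)
      then have "z \<notin> orb"
        using z'(2) f_orb by metis
      moreover have "z \<in> Y"
        using z' psubset.prems(1) by blast
      ultimately show "z \<in> Y - orb" by blast
    qed
    have "y \<in> orb"
      unfolding orb_def using p by (intro image_eqI[of _ _ 0]) auto
    then have smaller: "Y - orb \<subset> Y"
      using y by blast
    have "\<not> p dvd card (Y - orb)"
      using psubset.hyps \<open>orb \<subseteq> Y\<close> \<open>card orb = p\<close> psubset.prems(4) by (rule not_dvd_card_Diff)
    then have "\<exists>z\<in>Y - orb. f z = z"
      using psubset.prems(2,3) by (intro psubset.IH[OF smaller closed]) auto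
    then show ?thesis
      by blast
  qed (use y in blast)
qed

lemma (in group) exists_conj_in_sylow_subgroup:
  assumes fin: "finite (carrier G)" and R: "sylow_subgroup p R G"
    and p: "Factorial_Ring.prime p" and x: "x \<in> carrier G" "x [^] p = \<one>"
  shows "\<exists>g\<in>carrier G. g \<otimes> x \<otimes> inv g \<in> R"
proof -
  have sub: "subgroup R G" and card_R: "card R = p ^ multiplicity p (order G)"
    using R by (simp_all add: sylow_subgroup_def)
  have R_carrier: "R \<subseteq> carrier G"
    using sub by (rule subgroup.subset)
  define f where "f C = C #> x" for C
  have f_power: "(f ^^ n) (R #> a) = R #> (a \<otimes> x [^] n)" if "a \<in> carrier G" for a n
  proof (induction n)
    case (Suc n)
    then show ?case
      using that x R_carrier by (simp add: f_def coset_mult_assoc m_assoc)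
  qed (use that in simp)
  have "\<not> p dvd card (rcosets R)"
  proof
    assume "p dvd card (rcosets R)"
    then have "p ^ Suc (multiplicity p (order G)) dvd order G"
      using lagrange[OF sub] card_R by (metis mult_dvd_mono dvd_refl power_Suc mult.commute)
    moreover have "order G \<noteq> 0"
      using fin by (simp add: order_gt_0_iff_finite[symmetric])
    ultimately show False
      using prime_gt_1_nat[OF p] power_dvd_iff_le_multiplicity[of "order G" p "Suc (multiplicity p (order G))"]
      by simp
  qed
  moreover have "f ` (rcosets R) \<subseteq> rcosets R"
    using x R_carrier by (auto simp: RCOSETS_def f_def coset_mult_assoc intro!: rcosetsI)
  moreover have "(f ^^ p) C = C" if "C \<in> rcosets R" for C
    using that f_power x by (auto simp: RCOSETS_def)
  ultimately have "\<exists>C\<in>rcosets R. f C = C"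
    using fin p by (intro fixed_point_of_prime_period[where p = p]) (auto simp: RCOSETS_def)
  then obtain a where a: "a \<in> carrier G" "R #> (a \<otimes> x) = R #> a"
    using x R_carrier by (auto simp: RCOSETS_def f_def coset_mult_assoc)
  then have "a \<otimes> x \<in> R #> a"
    using rcos_self[of "a \<otimes> x" R] sub x by simp
  then have "a \<otimes> x \<otimes> inv a \<in> R"
    using subgroup.rcos_module_imp[OF sub is_group a(1)] by blast
  then show ?thesis
    using a(1) by blast
qed

lemma (in group) exists_elem_of_prime_order_if_pow_prime_power:
  fixes p a :: nat
  assumes "Factorial_Ring.prime p" "h \<in> carrier G" "h \<noteq> \<one>" "h [^] (p ^ a) = \<one>"
  shows "\<exists>z\<in>carrier G. z \<noteq> \<one> \<and> z [^] p = \<one>"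
proof -
  have "ord h dvd p ^ a"
    using assms(4) pow_eq_id[OF assms(2)] by simp
  then obtain j where j: "ord h = p ^ j"
    using divides_primepow_nat[OF assms(1)] by blast
  have "j \<noteq> 0"
  proof
    assume "j = 0"
    then have "ord h = 1"
      using j by simp
    with assms(2,3) show False
      using ord_eq_1 by blast
  qed
  define z where "z = h [^] (p ^ (j - 1))"
  have "p ^ (j - 1) * p = p ^ j"
    using \<open>j \<noteq> 0\<close> by (simp flip: power_Suc2)
  then have "z [^] p = h [^] (p ^ j)"
    using assms(2) by (simp add: z_def nat_pow_pow)
  then have "z [^] p = \<one>"
    using assms(2) j pow_eq_id by simp
  moreover have "z \<noteq> \<one>"
  proof
    assume "z = \<one>"
    then have "p ^ j dvd p ^ (j - 1)"
      using assms(2) j pow_eq_id by (simp add: z_def)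
    then have "j \<le> j - 1"
      using prime_gt_1_nat[OF assms(1)] by (rule power_dvd_imp_le)
    with \<open>j \<noteq> 0\<close> show False
      by simp
  qed
  ultimately show ?thesis
    using assms(2) by (auto simp: z_def)
qed

lemma (in group) exists_elem_of_prime_order:
  assumes fin: "finite (carrier G)" and p: "Factorial_Ring.prime p" and dvd: "p dvd order G"
  shows "\<exists>z\<in>carrier G. z \<noteq> \<one> \<and> z [^] p = \<one>"
proof -
  define a where "a = multiplicity p (order G)"
  have "order G = p ^ a * (order G div p ^ a)"
    by (simp add: a_def multiplicity_dvd)
  then obtain H where H: "subgroup H G" "card H = p ^ a"
    using sylow_thm[OF p is_group _ fin] by metis
  interpret H: group "G\<lparr>carrier := H\<rparr>"
    using H(1) by (rule subgroup.subgroup_is_group) (rule is_group)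
  have "order G \<noteq> 0"
    using fin by (simp add: order_gt_0_iff_finite[symmetric])
  then have "a \<noteq> 0"
    using p dvd by (simp add: a_def prime_multiplicity_gt_zero_iff prime_imp_prime_elem)
  then have card_H: "card H \<noteq> 1"
    using H(2) prime_gt_1_nat[OF p] by simp
  have "\<one> \<in> H"
    using H(1) by (rule subgroup.one_closed)
  have "\<exists>h\<in>H. h \<noteq> \<one>"
  proof (rule ccontr)
    assume "\<not> (\<exists>h\<in>H. h \<noteq> \<one>)"
    then have "H \<subseteq> {\<one>}"
      by blast
    with \<open>\<one> \<in> H\<close> have "H = {\<one>}"
      by blast
    with card_H show False
      by simp
  qed
  then obtain h where h: "h \<in> H" "h \<noteq> \<one>"
    by blast
  have "h [^]\<^bsub>G\<lparr>carrier := H\<rparr>\<^esub> order (G\<lparr>carrier := H\<rparr>) = \<one>\<^bsub>G\<lparr>carrier := H\<rparr>\<^esub>"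
    using h(1) by (intro H.pow_order_eq_1) (simp_all add: finite_subset[OF subgroup.subset[OF H(1)] fin])
  then have "h [^] (p ^ a) = \<one>"
    using H(2) nat_pow_consistent by (simp add: order_def)
  then show ?thesis
    using p subgroup.mem_carrier[OF H(1) h(1)] h(2) by (rule exists_elem_of_prime_order_if_pow_prime_power[rotated 3])
qed

section \<open>Finite fields and their automorphisms\<close>

lemma CHAR_eq_if_card_eq_prime_power:
  assumes "card (UNIV :: 'a::{idom, finite} set) = p ^ n" "Factorial_Ring.prime p"
  shows "CHAR('a) = p"
proof -
  have "Factorial_Ring.prime CHAR('a)"
    by (intro prime_CHAR_semidom finite_imp_CHAR_pos) simp
  moreover have "CHAR('a) dvd p ^ n"
    using CHAR_dvd_CARD[where 'a = 'a] assms(1) by simp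
  ultimately have "CHAR('a) dvd p"
    using prime_dvd_power by blast
  then show ?thesis
    using assms(2) \<open>Factorial_Ring.prime CHAR('a)\<close> by (simp add: primes_dvd_imp_eq)
qed

lemma card_additive_subgroup_dvd:
  fixes H :: "'a::{ab_group_add, finite} set"
  assumes "0 \<in> H" "\<And>x y. x \<in> H \<Longrightarrow> y \<in> H \<Longrightarrow> x + y \<in> H" "\<And>x. x \<in> H \<Longrightarrow> - x \<in> H"
  shows "card H dvd card (UNIV :: 'a set)"
proof -
  define G :: "'a monoid" where "G = \<lparr>carrier = UNIV, monoid.mult = (+), one = 0\<rparr>"
  interpret group G
    by (rule groupI) (auto simp: G_def add.assoc intro: exI[of _ "- x" for x])
  have inv: "inv\<^bsub>G\<^esub> x = - x" for x
    by (rule inv_equality) (simp_all add: G_def)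
  have "subgroup H G"
    using assms by (intro subgroupI) (auto simp: G_def inv[unfolded G_def])
  then have "card (rcosets\<^bsub>G\<^esub> H) * card H = card (UNIV :: 'a set)"
    using lagrange by (simp add: order_def G_def)
  then show ?thesis
    by (metis dvd_triv_right)
qed

lemma power_card_finite_subfield:
  fixes F :: "'a::field set"
  assumes "finite F" "0 \<in> F" "1 \<in> F" "\<And>x y. x \<in> F \<Longrightarrow> y \<in> F \<Longrightarrow> x * y \<in> F"
    and "\<And>x. x \<in> F \<Longrightarrow> inverse x \<in> F" "x \<in> F"
  shows "x ^ card F = x"
proof -
  have "card F > 0"
    using assms(1,2) by (auto simp: card_gt_0_iff)
  then have card_F: "card F = Suc (card F - 1)"
    by simp
  show ?thesis
  proof (cases "x = 0")
    case True
    then show ?thesis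
      by (subst card_F) simp
  next
    case False
    define G :: "'a monoid" where "G = \<lparr>carrier = F - {0}, monoid.mult = (*), one = 1\<rparr>"
    interpret group G
    proof (rule groupI)
      fix y assume "y \<in> carrier G"
      then show "\<exists>z\<in>carrier G. z \<otimes>\<^bsub>G\<^esub> y = \<one>\<^bsub>G\<^esub>"
        using assms(5) by (intro bexI[of _ "inverse y"]) (auto simp: G_def)
    qed (use assms(3,4) in \<open>auto simp: G_def mult.assoc\<close>)
    have power: "y [^]\<^bsub>G\<^esub> n = y ^ n" for y and n :: nat
      by (induction n) (simp_all add: G_def)
    have "x [^]\<^bsub>G\<^esub> order G = \<one>\<^bsub>G\<^esub>"
      using False assms(6) by (intro pow_order_eq_1) (simp_all add: G_def assms(1))
    then have "x ^ (card F - 1) = 1"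
      unfolding power using assms(1,2) by (simp add: order_def G_def card_Diff_singleton)
    then show ?thesis
      by (subst card_F) simp
  qed
qed

lemma field_aut_add: "field_aut s \<Longrightarrow> s (a + b) = s a + s b"
  and field_aut_mult: "field_aut s \<Longrightarrow> s (a * b) = s a * s b"
  and field_aut_bij: "field_aut s \<Longrightarrow> bij s"
  by (simp_all add: field_aut_def)

lemma field_aut_0:
  assumes "field_aut s"
  shows "s 0 = 0"
  using field_aut_add[OF assms, of 0 0] by (simp only: add_0_right add_cancel_right_right)

lemma field_aut_1:
  assumes "field_aut s"
  shows "s 1 = 1"
proof -
  have "s 1 \<noteq> s 0"
    using bij_is_inj[OF field_aut_bij[OF assms]] by (simp add: inj_eq)
  then have "s 1 \<noteq> 0"
    by (simp add: field_aut_0[OF assms])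
  then show ?thesis
    using field_aut_mult[OF assms, of 1 1] by simp
qed

lemma field_aut_uminus:
  assumes "field_aut s"
  shows "s (- a) = - s a"
proof -
  have "s a + s (- a) = 0"
    using field_aut_add[OF assms, of a "- a"] field_aut_0[OF assms] by simp
  then have "- s a = s (- a)"
    by (rule add.inverse_unique)
  then show ?thesis ..
qed

lemma field_aut_diff:
  assumes "field_aut s"
  shows "s (a - b) = s a - s b"
  using field_aut_add[OF assms, of a "- b"] field_aut_uminus[OF assms] by simp

lemma field_aut_of_nat: "field_aut s \<Longrightarrow> s (of_nat n) = of_nat n"
  by (induction n) (simp_all add: field_aut_0 field_aut_1 field_aut_add)

lemma field_aut_inverse:
  assumes "field_aut s"
  shows "s (inverse a) = inverse (s a)"
proof (cases "a = 0")
  case False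
  then have "s a * s (inverse a) = 1"
    using field_aut_mult[OF assms, of a "inverse a"] field_aut_1[OF assms] by simp
  then have "inverse (s a) = s (inverse a)"
    by (rule inverse_unique)
  then show ?thesis ..
qed (simp add: field_aut_0[OF assms])

lemma field_aut_id: "field_aut id"
  by (simp add: field_aut_def)

lemma field_aut_comp: "field_aut s \<Longrightarrow> field_aut t \<Longrightarrow> field_aut (s \<circ> t)"
  by (simp add: field_aut_def bij_comp)

lemma field_aut_inv_into:
  assumes "field_aut s"
  shows "field_aut (inv_into UNIV s)"
proof -
  have bij: "bij s"
    using assms by (rule field_aut_bij)
  have s_inv: "s (inv_into UNIV s a) = a" and inv_s: "inv_into UNIV s (s a) = a" for a
    using bij by (simp_all add: bij_is_surj surj_f_inv_f bij_is_inj)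
  have "inv_into UNIV s (a + b) = inv_into UNIV s (s (inv_into UNIV s a + inv_into UNIV s b))"
    "inv_into UNIV s (a * b) = inv_into UNIV s (s (inv_into UNIV s a * inv_into UNIV s b))" for a b
    by (simp_all add: field_aut_add[OF assms] field_aut_mult[OF assms] s_inv)
  then show ?thesis
    using bij by (simp add: field_aut_def bij_imp_bij_inv inv_s)
qed

lemma card_field_aut_fixed_dvd:
  assumes "field_aut (s :: 'a::{field, finite} \<Rightarrow> 'a)"
  shows "card {x. s x = x} dvd card (UNIV :: 'a set)"
  using assms by (intro card_additive_subgroup_dvd) (simp_all add: field_aut_0 field_aut_add field_aut_uminus)

lemma power_card_field_aut_fixed:
  assumes "field_aut (s :: 'a::{field, finite} \<Rightarrow> 'a)" "s x = x"
  shows "x ^ card {x. s x = x} = x"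
  using assms
  by (intro power_card_finite_subfield)
    (simp_all add: field_aut_0 field_aut_1 field_aut_mult field_aut_inverse)

lemma three_eq_0_if_card_eq_3_power:
  assumes "card (UNIV :: 'a::{idom, finite} set) = 3 ^ f"
  shows "(3::'a) = 0"
proof -
  have "CHAR('a) = 3"
    using assms by (rule CHAR_eq_if_card_eq_prime_power) simp
  then show ?thesis
    using of_nat_CHAR[where 'a = 'a] by simp
qed

lemma two_ne_0_if_three_eq_0:
  assumes "(3::'a::ring_1) = 0"
  shows "(2::'a) \<noteq> 0"
proof
  assume "(2::'a) = 0"
  moreover have "(3::'a) = 2 + 1"
    by simp
  ultimately show False
    using assms by simp
qed

section \<open>Two by two matrices\<close>

datatype 'a mat2 = Mat2 'a 'a 'a 'a

instantiation mat2 :: (comm_ring_1) monoid_mult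
begin

definition one_mat2 :: "'a mat2" where
  "1 = Mat2 1 0 0 1"

fun times_mat2 :: "'a mat2 \<Rightarrow> 'a mat2 \<Rightarrow> 'a mat2" where
  "Mat2 a b c d * Mat2 a' b' c' d' =
     Mat2 (a * a' + b * c') (a * b' + b * d') (c * a' + d * c') (c * b' + d * d')"

instance
proof
  fix A B C :: "'a mat2"
  show "A * B * C = A * (B * C)"
    by (cases A; cases B; cases C) (simp add: algebra_simps)
  show "1 * A = A" "A * 1 = A"
    by (cases A; simp add: one_mat2_def)+
qed

end

fun mat2_det :: "'a::comm_ring_1 mat2 \<Rightarrow> 'a" where
  "mat2_det (Mat2 a b c d) = a * d - b * c"

fun mat2_trace :: "'a::comm_ring_1 mat2 \<Rightarrow> 'a" where
  "mat2_trace (Mat2 a b c d) = a + d"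

fun mat2_adj :: "'a::comm_ring_1 mat2 \<Rightarrow> 'a mat2" where
  "mat2_adj (Mat2 a b c d) = Mat2 d (- b) (- c) a"

fun mat2_lincomb :: "'a::comm_ring_1 \<Rightarrow> 'a \<Rightarrow> 'a mat2 \<Rightarrow> 'a mat2" where
  "mat2_lincomb x y (Mat2 a b c d) = Mat2 (x + y * a) (y * b) (y * c) (x + y * d)"

lemma mat2_det_mult: "mat2_det (A * B) = mat2_det A * mat2_det B"
  by (cases A; cases B) (simp add: algebra_simps)

lemma mat2_det_power: "mat2_det (A ^ n) = mat2_det A ^ n"
  by (induction n) (simp_all add: mat2_det_mult one_mat2_def)

lemma mat2_mult_adj:
  assumes "mat2_det A = 1"
  shows "A * mat2_adj A = 1" "mat2_adj A * A = 1"
  using assms by (cases A; simp add: one_mat2_def algebra_simps)+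

lemma mat2_lincomb_mult_self:
  fixes M :: "'a::idom mat2"
  assumes "mat2_det M = 1"
  shows "mat2_lincomb x y M * M = mat2_lincomb (- y) (x + y * mat2_trace M) M"
proof -
  obtain a b c d where M: "M = Mat2 a b c d" by (cases M)
  have "a * d - b * c = 1" using assms by (simp add: M)
  then show ?thesis by (simp add: M algebra_simps) Groebner_Basis.algebra
qed

lemma mat2_power_lincomb:
  fixes M :: "'a::idom mat2"
  assumes "mat2_det M = 1"
  shows "\<exists>x y. M ^ n = mat2_lincomb x y M"
proof (induction n)
  case 0
  have "M ^ 0 = mat2_lincomb 1 0 M" by (cases M) (simp add: one_mat2_def)
  then show ?case by blast
next
  case (Suc n)
  then obtain x y where "M ^ n = mat2_lincomb x y M" by blast
  then have "M ^ Suc n = mat2_lincomb (- y) (x + y * mat2_trace M) M"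
    by (simp only: power_Suc2) (simp add: mat2_lincomb_mult_self assms)
  then show ?case by blast
qed

lemma mat2_trace_cube:
  assumes "(3::'a::comm_ring_1) = 0" "mat2_det (M::'a mat2) = 1"
  shows "mat2_trace (M ^ 3) = mat2_trace M ^ 3"
proof -
  obtain a b c d where M: "M = Mat2 a b c d" by (cases M)
  have "mat2_trace (M ^ 3) = (a + d) ^ 3 - 3 * (a + d) * (a * d - b * c)"
    by (simp add: M numeral_3_eq_3 one_mat2_def algebra_simps power3_eq_cube)
  then show ?thesis using assms(1) by (simp add: M)
qed

lemma mat2_trace_power_3_power:
  assumes "(3::'a::comm_ring_1) = 0" "mat2_det (M::'a mat2) = 1"
  shows "mat2_trace (M ^ 3 ^ j) = mat2_trace M ^ 3 ^ j"
proof (induction j)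
  case 0
  show ?case by simp
next
  case (Suc j)
  have "M ^ 3 ^ Suc j = (M ^ 3 ^ j) ^ 3" by (simp add: power_mult[symmetric] mult.commute)
  then show ?case
    using mat2_trace_cube[OF assms(1), of "M ^ 3 ^ j"] assms(2) Suc
    by (simp add: mat2_det_power power_mult[symmetric] mult.commute)
qed

lemma mat2_eq_or_adj_if_trace_eq:
  fixes M N :: "'a::field mat2"
  assumes "mat2_det M = 1" "mat2_det N = 1" "N = mat2_lincomb x y M"
    and "mat2_trace N = mat2_trace M" "mat2_trace M ^ 2 \<noteq> 4" "(2::'a) \<noteq> 0"
  shows "N = M \<or> N = mat2_adj M"
proof -
  obtain a b c d where M: "M = Mat2 a b c d" by (cases M)
  define t where "t = a + d"
  have x: "2 * x = t * (1 - y)"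
    using assms(3,4) by (simp add: M t_def algebra_simps)
  have "a * d - b * c = 1" "(x + y * a) * (x + y * d) - y * b * (y * c) = 1"
    using assms(1-3) by (simp_all add: M)
  then have "x * x + x * y * t + y * y = 1"
    unfolding t_def by Groebner_Basis.algebra
  then have "(1 - y * y) * (t * t - 4) = 0"
    using x by Groebner_Basis.algebra
  moreover have "t * t \<noteq> 4"
    using assms(5) by (simp add: M t_def power2_eq_square)
  ultimately have "y = 1 \<or> y = -1"
    by (simp add: square_eq_1_iff)
  then show ?thesis
  proof
    assume "y = 1"
    with x assms(6) have "x = 0" by simp
    with \<open>y = 1\<close> show ?thesis using assms(3) by (simp add: M)
  next
    assume "y = -1"
    with x assms(6) have "x = t" by (simp add: mult.commute)
    with \<open>y = -1\<close> show ?thesis using assms(3) by (simp add: M t_def)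
  qed
qed

lemma mat2_power_6_if_trace_square_4:
  fixes M :: "'a::idom mat2"
  assumes "(3::'a) = 0" "mat2_det M = 1" "mat2_trace M ^ 2 = 4"
  shows "M ^ 6 = 1"
proof -
  define c where "c = mat2_trace M"
  have "(4::'a) = 3 + 1" by simp
  then have c: "c * c = 1"
    using assms(1,3) by (simp add: c_def power2_eq_square)
  have "M = mat2_lincomb 0 1 M"
    by (cases M) simp
  then have "M ^ 3 = mat2_lincomb 0 1 M * M * M"
    by (metis power3_eq_cube)
  also have "\<dots> = mat2_lincomb (- c) (c * c - 1) M"
    by (simp add: mat2_lincomb_mult_self assms(2) c_def algebra_simps)
  also have "\<dots> = Mat2 (- c) 0 0 (- c)"
    using c by (cases M) simp
  finally have "M ^ (3 + 3) = Mat2 (- c) 0 0 (- c) * Mat2 (- c) 0 0 (- c)"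
    by (simp only: power_add)
  then show ?thesis
    using c by (simp add: one_mat2_def)
qed

lemma mat2_power_3_power_pm_1_eq_1:
  fixes M :: "'a::field mat2"
  assumes "(3::'a) = 0" "mat2_det M = 1" "mat2_trace M ^ 2 \<noteq> 4"
    and "mat2_trace M ^ 3 ^ m = mat2_trace M"
  shows "M ^ (3 ^ m - 1) = 1 \<or> M ^ (3 ^ m + 1) = 1"
proof -
  define N where "N = M ^ 3 ^ m"
  have "mat2_det N = 1"
    using assms(2) by (simp add: N_def mat2_det_power)
  moreover have "mat2_trace N = mat2_trace M"
    using mat2_trace_power_3_power[OF assms(1,2)] assms(4) by (simp add: N_def)
  moreover obtain x y where "N = mat2_lincomb x y M"
    using mat2_power_lincomb[OF assms(2)] N_def by blast
  ultimately have "N = M \<or> N = mat2_adj M"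
    using assms(2,3) two_ne_0_if_three_eq_0[OF assms(1)] by (intro mat2_eq_or_adj_if_trace_eq)
  then show ?thesis
  proof
    assume "N = M"
    have "M ^ (3 ^ m - 1) = M ^ (3 ^ m - 1) * M * mat2_adj M"
      using assms(2) by (simp add: mult.assoc mat2_mult_adj)
    also have "\<dots> = N * mat2_adj M"
      by (simp add: N_def flip: power_Suc2)
    finally show ?thesis
      using \<open>N = M\<close> assms(2) by (simp add: mat2_mult_adj)
  next
    assume "N = mat2_adj M"
    then show ?thesis
      using assms(2) by (simp add: N_def power_Suc2 mat2_mult_adj del: power_Suc)
  qed
qed

lemma mat2_trace_square_ne_4:
  fixes M :: "'a::idom mat2"
  assumes "(3::'a) = 0" "mat2_det M = 1" "M ^ r = 1" "M \<noteq> 1"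
    and "Factorial_Ring.prime r" "r > 3"
  shows "mat2_trace M ^ 2 \<noteq> 4"
proof
  assume "mat2_trace M ^ 2 = 4"
  then have "M ^ 6 = 1"
    using assms(1,2) by (rule mat2_power_6_if_trace_square_4[rotated 2])
  then have "r dvd 2 * 3"
    using prime_dvd_if_power_eq_1[OF assms(3) _ assms(4,5)] by simp
  then have "r dvd 2 \<or> r dvd 3"
    using prime_dvd_mult_iff[OF assms(5), of 2 3] by simp
  then have "r \<le> 3"
    by (auto dest: dvd_imp_le)
  with assms(6) show False
    by simp
qed

section \<open>The nonsplit torus\<close>

lemma exists_nonsquare:
  assumes "(2::'a::{field, finite}) \<noteq> 0"
  shows "\<exists>d::'a. \<forall>x. x * x \<noteq> d"
proof (rule ccontr)
  assume "\<not> ?thesis"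
  then have "surj (\<lambda>x::'a. x * x)"
    by (metis surjI)
  then have "inj (\<lambda>x::'a. x * x)"
    using finite_UNIV_surj_inj[OF finite_UNIV] by blast
  moreover have "(1::'a) * 1 = (- 1) * (- 1)"
    by simp
  ultimately have "(1::'a) = - 1"
    by (rule injD)
  then have "(2::'a) = 0"
    by (metis add_eq_0_iff one_add_one)
  with assms show False ..
qed

(* Mat2 a (d * b) b a is the matrix of multiplication by a + b sqrt d on K(sqrt d) = K + K sqrt d;
   for nonsquare d these matrices form a copy of the multiplicative group of K(sqrt d). *)
definition nonsplit_torus :: "'a::field \<Rightarrow> 'a mat2 monoid" where
  "nonsplit_torus d =
     \<lparr>carrier = {Mat2 a (d * b) b a | a b. a * a - d * b * b \<noteq> 0}, monoid.mult = (*), one = 1\<rparr>"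

lemma mat2_in_nonsplit_torus:
  "Mat2 a (d * b) b a \<in> carrier (nonsplit_torus d) \<longleftrightarrow> a * a - d * b * b \<noteq> 0"
  by (auto simp: nonsplit_torus_def)

lemma group_nonsplit_torus: "group (nonsplit_torus d)"
proof (rule groupI)
  fix M N assume "M \<in> carrier (nonsplit_torus d)" "N \<in> carrier (nonsplit_torus d)"
  then obtain a b a' b' where MN: "M = Mat2 a (d * b) b a" "N = Mat2 a' (d * b') b' a'"
    and det: "a * a - d * b * b \<noteq> 0" "a' * a' - d * b' * b' \<noteq> 0"
    by (auto simp: nonsplit_torus_def)
  define A B where "A = a * a' + d * b * b'" and "B = a * b' + b * a'"
  have "M * N = Mat2 A (d * B) B A"
    by (simp add: MN A_def B_def algebra_simps)
  moreover have "A * A - d * B * B = (a * a - d * b * b) * (a' * a' - d * b' * b')"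
    by (simp add: A_def B_def algebra_simps)
  then have "A * A - d * B * B \<noteq> 0"
    using det by simp
  ultimately show "M \<otimes>\<^bsub>nonsplit_torus d\<^esub> N \<in> carrier (nonsplit_torus d)"
    using det by (simp add: mat2_in_nonsplit_torus) (simp add: nonsplit_torus_def)
next
  fix M assume "M \<in> carrier (nonsplit_torus d)"
  then obtain a b where M: "M = Mat2 a (d * b) b a" and det: "a * a - d * b * b \<noteq> 0"
    by (auto simp: nonsplit_torus_def)
  define n where "n = a * a - d * b * b"
  have n: "n \<noteq> 0"
    using det by (simp add: n_def)
  have "(a / n) * (a / n) - d * (- b / n) * (- b / n) = n / (n * n)"
    using n by (simp add: field_simps) (simp add: n_def algebra_simps)
  then have inv_mem: "Mat2 (a / n) (d * (- b / n)) (- b / n) (a / n) \<in> carrier (nonsplit_torus d)"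
    using n by (subst mat2_in_nonsplit_torus) simp
  have inv_mult: "Mat2 (a / n) (d * (- b / n)) (- b / n) (a / n) * M = 1"
    using n by (simp add: M one_mat2_def field_simps) (simp add: n_def algebra_simps)
  show "\<exists>N\<in>carrier (nonsplit_torus d). N \<otimes>\<^bsub>nonsplit_torus d\<^esub> M = \<one>\<^bsub>nonsplit_torus d\<^esub>"
    using inv_mult by (intro bexI[OF _ inv_mem]) (simp add: nonsplit_torus_def)
next
  show "\<one>\<^bsub>nonsplit_torus d\<^esub> \<in> carrier (nonsplit_torus d)"
    using mat2_in_nonsplit_torus[of 1 d 0] by (simp add: nonsplit_torus_def one_mat2_def)
qed (simp_all add: nonsplit_torus_def mult.assoc)

lemma finite_nonsplit_torus: "finite (carrier (nonsplit_torus (d::'a::{field, finite})))"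
proof (rule finite_subset)
  show "carrier (nonsplit_torus d) \<subseteq> (\<lambda>(a, b). Mat2 a (d * b) b a) ` UNIV"
    by (auto simp: nonsplit_torus_def)
qed simp

lemma nat_pow_nonsplit_torus: "M [^]\<^bsub>nonsplit_torus d\<^esub> (n::nat) = M ^ n"
  by (induction n) (simp_all add: nonsplit_torus_def power_commutes)

lemma order_nonsplit_torus:
  fixes d :: "'a::{field, finite}"
  assumes "\<forall>x. x * x \<noteq> d"
  shows "order (nonsplit_torus d) = card (UNIV :: 'a set) ^ 2 - 1"
proof -
  have "a * a - d * b * b \<noteq> 0 \<longleftrightarrow> (a, b) \<noteq> (0, 0)" for a b :: 'a
  proof
    assume "(a, b) \<noteq> (0, 0)"
    show "a * a - d * b * b \<noteq> 0"
    proof (cases "b = 0")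
      case False
      then have "(a / b) * (a / b) \<noteq> d"
        using assms by blast
      with False show ?thesis
        by (simp add: field_simps)
    qed (use \<open>(a, b) \<noteq> (0, 0)\<close> in simp)
  qed auto
  then have "carrier (nonsplit_torus d) = (\<lambda>(a, b). Mat2 a (d * b) b a) ` (UNIV - {(0, 0)})"
    by (auto simp: nonsplit_torus_def)
  moreover have "inj (\<lambda>(a, b). Mat2 a (d * b) b (a::'a))"
    by (auto intro: injI)
  ultimately have "order (nonsplit_torus d) = card (UNIV - {(0::'a, 0::'a)})"
    by (simp add: order_def card_image inj_on_subset[of _ UNIV])
  also have "\<dots> = card (UNIV :: 'a set) ^ 2 - 1"
    by (simp add: card_Diff_singleton UNIV_Times_UNIV[symmetric] card_cartesian_product power2_eq_square
        del: UNIV_Times_UNIV)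
  finally show ?thesis .
qed

lemma exists_mat2_det_1_of_prime_order:
  assumes "card (UNIV :: 'a::{field, finite} set) = q" "(2::'a) \<noteq> 0"
    and "Factorial_Ring.prime r" "r dvd q ^ 2 - 1" "coprime r (q - 1)"
  shows "\<exists>M::'a mat2. mat2_det M = 1 \<and> M ^ r = 1 \<and> M \<noteq> 1"
proof -
  obtain d :: 'a where d: "\<forall>x. x * x \<noteq> d"
    using exists_nonsquare[OF assms(2)] by blast
  interpret T: group "nonsplit_torus d"
    by (rule group_nonsplit_torus)
  have "r dvd order (nonsplit_torus d)"
    using order_nonsplit_torus[OF d] assms(1,4) by simp
  then obtain M where "M \<in> carrier (nonsplit_torus d)" "M \<noteq> \<one>\<^bsub>nonsplit_torus d\<^esub>"
    "M [^]\<^bsub>nonsplit_torus d\<^esub> r = \<one>\<^bsub>nonsplit_torus d\<^esub>"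
    using T.exists_elem_of_prime_order[OF finite_nonsplit_torus assms(3)] by auto
  then have M: "M \<in> carrier (nonsplit_torus d)" "M \<noteq> 1" "M ^ r = 1"
    unfolding nat_pow_nonsplit_torus by (simp_all add: nonsplit_torus_def)
  have "mat2_det M \<noteq> 0"
    using M(1) by (auto simp: nonsplit_torus_def)
  have "mat2_det M ^ r = 1"
    using M(3) by (simp flip: mat2_det_power add: one_mat2_def)
  moreover have "mat2_det M ^ (q - 1) = 1"
  proof -
    have "mat2_det M ^ q = mat2_det M"
      using power_card_finite_subfield[of UNIV "mat2_det M"] assms(1) by simp
    moreover have "q = Suc (q - 1)"
      using assms(1) finite_UNIV_card_ge_0[where 'a = 'a] by simp
    ultimately show ?thesis
      using \<open>mat2_det M \<noteq> 0\<close> by (metis mult_cancel_left1 power_Suc)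
  qed
  ultimately have "mat2_det M ^ gcd r (q - 1) = 1"
    by (rule power_gcd_eq_1)
  then show ?thesis
    using M(2,3) assms(5) by auto
qed

section \<open>Zsigmondy primes\<close>

lemma ord_dvd_double_if_dvd_power_pm_1:
  fixes a m r :: nat
  assumes "r dvd a ^ m - 1 \<or> r dvd a ^ m + 1" "a > 0"
  shows "ord r a dvd 2 * m"
proof -
  have "a ^ (2 * m) - 1 = (a ^ m - 1) * (a ^ m + 1)"
    using assms(2) by (simp add: power_mult algebra_simps power2_eq_square)
  moreover from assms(1) have "r dvd (a ^ m - 1) * (a ^ m + 1)"
  proof
    assume "r dvd a ^ m - 1"
    then show ?thesis by (rule dvd_mult2)
  next
    assume "r dvd a ^ m + 1"
    then show ?thesis by (rule dvd_mult)
  qed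
  ultimately have "r dvd a ^ (2 * m) - 1"
    by simp
  then have "[a ^ (2 * m) = 1] (mod r)"
    using assms(2) by (simp add: cong_altdef_nat)
  then show ?thesis
    by (simp add: ord_divides')
qed

lemma zsigmondy_prime_gt_3:
  fixes r f :: nat
  assumes "Factorial_Ring.prime r" "ord r 3 = 2 * f" "r dvd 3 ^ f + 1" "f > 0"
  shows "r > 3"
proof -
  have "r \<noteq> 2"
  proof
    assume "r = 2"
    then have "ord r 3 = 1"
      by (simp add: ord_eq_Suc_0_iff cong_def)
    with assms(2,4) show False
      by simp
  qed
  moreover have "r \<noteq> 3"
  proof
    assume "r = 3"
    then have "(3::nat) dvd (3 ^ f + 1) - 3 ^ f"
      using assms(3,4) by (intro dvd_diff_nat) simp_all
    then show False
      by simp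
  qed
  ultimately show ?thesis
    using prime_ge_2_nat[OF assms(1)] by linarith
qed

lemma coprime_pred_if_dvd_succ:
  fixes q r :: nat
  assumes "Factorial_Ring.prime r" "r > 2" "r dvd q + 1"
  shows "coprime r (q - 1)"
proof -
  have "\<not> r dvd q - 1"
  proof
    assume "r dvd q - 1"
    with assms(3) have "r dvd (q + 1) - (q - 1)"
      by (rule dvd_diff_nat)
    then have "r \<le> (q + 1) - (q - 1)"
      by (rule dvd_imp_le) simp
    with assms(2) show False
      by linarith
  qed
  then show ?thesis
    using assms(1) by (simp add: prime_imp_coprime_nat)
qed

lemma field_aut_eq_id_if_fixes_trace:
  fixes M :: "'a::{field, finite} mat2"
  assumes s: "field_aut s" and card: "card (UNIV :: 'a set) = 3 ^ f"
    and M: "mat2_det M = 1" "M ^ r = 1" "M \<noteq> 1" "mat2_trace M ^ 2 \<noteq> 4"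
    and r: "Factorial_Ring.prime r" "ord r 3 = 2 * f"
    and fixed: "s (mat2_trace M) = mat2_trace M"
  shows "s = id"
proof -
  let ?F = "{x. s x = x}"
  obtain m where m: "m \<le> f" "card ?F = 3 ^ m"
    using card_field_aut_fixed_dvd[OF s] card divides_primepow_nat[of 3 "card ?F" f] by auto
  have "mat2_trace M ^ 3 ^ m = mat2_trace M"
    using power_card_field_aut_fixed[OF s fixed] m(2) by simp
  then have "M ^ (3 ^ m - 1) = 1 \<or> M ^ (3 ^ m + 1) = 1"
    by (rule mat2_power_3_power_pm_1_eq_1[OF three_eq_0_if_card_eq_3_power[OF card] M(1,4)])
  then have "r dvd 3 ^ m - 1 \<or> r dvd 3 ^ m + 1"
    using prime_dvd_if_power_eq_1[OF M(2) _ M(3) r(1)] by (elim disjE) simp_all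
  then have "f dvd m"
    using ord_dvd_double_if_dvd_power_pm_1[of r 3 m] r(2) by simp
  moreover have "card {0, 1 :: 'a} \<le> card ?F"
    using s by (intro card_mono) (simp_all add: field_aut_0 field_aut_1)
  then have "m \<noteq> 0"
    using m(2) by (intro notI) simp
  ultimately have "m = f"
    using m(1) by (simp add: dvd_imp_le le_antisym)
  then have "card ?F = card (UNIV :: 'a set)"
    using m(2) card by simp
  then have "?F = UNIV"
    by (simp add: card_subset_eq)
  then show ?thesis
    by (simp add: fun_eq_iff set_eq_iff)
qed

section \<open>Semilinear automorphisms of the split octonions\<close>

definition semilinear_aut :: "('k::field \<Rightarrow> 'k) \<Rightarrow> ('k oct \<Rightarrow> 'k oct) \<Rightarrow> bool" where
  "semilinear_aut s g \<longleftrightarrow> bij g \<and>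
     (\<forall>x y. g (oct_add x y) = oct_add (g x) (g y)) \<and>
     (\<forall>c x. g (oct_smult c x) = oct_smult (s c) (g x)) \<and>
     (\<forall>x y. g (oct_mult x y) = oct_mult (g x) (g y))"

lemma semilinear_autI:
  assumes "bij g" "\<And>x y. g (oct_add x y) = oct_add (g x) (g y)"
    and "\<And>c x. g (oct_smult c x) = oct_smult (s c) (g x)"
    and "\<And>x y. g (oct_mult x y) = oct_mult (g x) (g y)"
  shows "semilinear_aut s g"
  using assms unfolding semilinear_aut_def by blast

lemma
  assumes "semilinear_aut s g"
  shows semilinear_aut_bij: "bij g"
    and semilinear_aut_add: "g (oct_add x y) = oct_add (g x) (g y)"
    and semilinear_aut_smult: "g (oct_smult c x) = oct_smult (s c) (g x)"
    and semilinear_aut_mult: "g (oct_mult x y) = oct_mult (g x) (g y)"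
  using assms unfolding semilinear_aut_def by blast+

lemma G2_set_eq: "G2_set = {g. semilinear_aut id g}"
  unfolding G2_set_def semilinear_aut_def id_apply ..

lemma semilinear_aut_id: "semilinear_aut id id"
  by (rule semilinear_autI) simp_all

lemma semilinear_aut_comp:
  "semilinear_aut s f \<Longrightarrow> semilinear_aut t g \<Longrightarrow> semilinear_aut (s \<circ> t) (f \<circ> g)"
  by (rule semilinear_autI)
    (simp_all add: semilinear_aut_bij semilinear_aut_add semilinear_aut_smult semilinear_aut_mult bij_comp)

lemma semilinear_aut_inv_into:
  assumes "semilinear_aut s g" "bij s"
  shows "semilinear_aut (inv_into UNIV s) (inv_into UNIV g)"
proof -
  have bij: "bij g"
    using assms(1) by (rule semilinear_aut_bij)
  have g_inv: "g (inv_into UNIV g x) = x" and inv_g: "inv_into UNIV g (g x) = x" for x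
    using bij by (simp_all add: bij_is_surj surj_f_inv_f bij_is_inj)
  have s_inv: "s (inv_into UNIV s c) = c" for c
    using assms(2) by (simp add: bij_is_surj surj_f_inv_f)
  let ?h = "inv_into UNIV g"
  have "?h (oct_add x y) = ?h (g (oct_add (?h x) (?h y)))"
    "?h (oct_smult c x) = ?h (g (oct_smult (inv_into UNIV s c) (?h x)))"
    "?h (oct_mult x y) = ?h (g (oct_mult (?h x) (?h y)))" for c x y
    using assms(1)
    by (simp_all add: semilinear_aut_add semilinear_aut_smult semilinear_aut_mult g_inv s_inv)
  then show ?thesis
    using bij by (intro semilinear_autI) (simp_all add: inv_g bij_imp_bij_inv)
qed

lemma oct_cases:
  obtains a v1 v2 v3 w1 w2 w3 b where "x = (a, (v1, v2, v3), (w1, w2, w3), b)"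
  by (cases x) auto

lemma oct_map_comp: "oct_map s \<circ> oct_map t = oct_map (s \<circ> t)"
  by (rule ext, case_tac x rule: oct_cases) simp

lemma oct_map_id: "oct_map id = id"
  by (rule ext, case_tac x rule: oct_cases) simp

lemma semilinear_aut_oct_map:
  assumes "field_aut s"
  shows "semilinear_aut s (oct_map s)"
proof (rule semilinear_autI)
  have "s \<circ> inv_into UNIV s = id"
    using bij_is_surj[OF field_aut_bij[OF assms]] surj_iff by blast
  moreover have "inv_into UNIV s \<circ> s = id"
    using bij_is_inj[OF field_aut_bij[OF assms]] inj_iff by blast
  ultimately
  have "oct_map s \<circ> oct_map (inv_into UNIV s) = id" "oct_map (inv_into UNIV s) \<circ> oct_map s = id"
    by (simp_all add: oct_map_comp oct_map_id)
  then show "bij (oct_map s)"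
    using o_bij by blast
  show "oct_map s (oct_add x y) = oct_add (oct_map s x) (oct_map s y)"
    "oct_map s (oct_smult c x) = oct_smult (s c) (oct_map s x)"
    "oct_map s (oct_mult x y) = oct_mult (oct_map s x) (oct_map s y)" for c x y
    by (cases x rule: oct_cases; cases y rule: oct_cases;
        simp add: field_aut_add[OF assms] field_aut_mult[OF assms] field_aut_diff[OF assms]
          field_aut_uminus[OF assms] field_aut_1[OF assms])+
qed

definition oct_zero :: "'k::field oct" where
  "oct_zero = (0, (0, 0, 0), (0, 0, 0), 0)"

lemma semilinear_aut_zero:
  fixes g :: "'k::field oct \<Rightarrow> 'k oct"
  assumes "semilinear_aut s g" "field_aut s"
  shows "g oct_zero = oct_zero"
proof -
  have "oct_zero = oct_smult 0 (oct_zero :: 'k oct)"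
    by (simp add: oct_zero_def)
  then have "g oct_zero = oct_smult (s 0) (g oct_zero)"
    using semilinear_aut_smult[OF assms(1)] by metis
  also have "\<dots> = oct_zero"
    by (cases "g oct_zero" rule: oct_cases) (simp add: field_aut_0[OF assms(2)] oct_zero_def)
  finally show ?thesis .
qed

lemma Perm_oct_mult: "bij f \<Longrightarrow> bij g \<Longrightarrow> f \<otimes>\<^bsub>Perm_oct\<^esub> g = f \<circ> g"
  by (auto simp: BijGroup_def Bij_def compose_def)

lemma Perm_oct_one: "\<one>\<^bsub>Perm_oct\<^esub> = id"
  by (auto simp: BijGroup_def)

lemma Perm_oct_inv: "bij f \<Longrightarrow> inv\<^bsub>Perm_oct\<^esub> f = inv_into UNIV f"
  by (simp add: inv_BijGroup Bij_def restrict_UNIV)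

lemma A0hat_semilinear_aut:
  assumes "a \<in> (A0hat :: ('k::field oct \<Rightarrow> 'k oct) set)"
  shows "\<exists>s. field_aut s \<and> semilinear_aut s a"
  using assms unfolding A0hat_def
proof (induction rule: generate.induct)
  case one
  then show ?case
    using field_aut_id semilinear_aut_id by (metis Perm_oct_one)
next
  case (incl h)
  then show ?case
    using field_aut_id semilinear_aut_oct_map by (auto simp: G2_set_eq)
next
  case (inv h)
  then obtain s where "field_aut s" "semilinear_aut s h"
    using field_aut_id semilinear_aut_oct_map by (auto simp: G2_set_eq)
  then show ?case
    using semilinear_aut_inv_into field_aut_inv_into field_aut_bij
    by (metis Perm_oct_inv semilinear_aut_bij)
next
  case (eng h1 h2)
  then obtain s t where "field_aut s" "semilinear_aut s h1" "field_aut t" "semilinear_aut t h2"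
    by blast
  then show ?case
    using field_aut_comp semilinear_aut_comp by (metis Perm_oct_mult semilinear_aut_bij)
qed

lemma subgroup_G2_set: "subgroup (G2_set :: ('k::field oct \<Rightarrow> 'k oct) set) Perm_oct"
proof (rule group.subgroupI[OF group_BijGroup])
  show "G2_set \<subseteq> carrier (Perm_oct :: ('k oct \<Rightarrow> 'k oct) monoid)"
    by (auto simp: BijGroup_def Bij_def G2_set_eq semilinear_aut_bij)
  show "G2_set \<noteq> {}"
    using semilinear_aut_id by (auto simp: G2_set_eq)
  fix f g :: "'k oct \<Rightarrow> 'k oct"
  assume "f \<in> G2_set" "g \<in> G2_set"
  then show "inv\<^bsub>Perm_oct\<^esub> f \<in> G2_set" "f \<otimes>\<^bsub>Perm_oct\<^esub> g \<in> G2_set"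
    using semilinear_aut_inv_into[of id f] semilinear_aut_comp[of id f id g]
    by (simp_all add: G2_set_eq Perm_oct_inv Perm_oct_mult semilinear_aut_bij inv_id)
qed

lemma group_G2: "group G2"
  unfolding G2_def using subgroup.subgroup_is_group[OF subgroup_G2_set group_BijGroup] .

lemma G2_carrier [simp]: "carrier G2 = G2_set"
  by (simp add: G2_def)

lemma G2_one: "\<one>\<^bsub>G2\<^esub> = id"
  by (simp add: G2_def Perm_oct_one)

lemma G2_mult: "f \<in> G2_set \<Longrightarrow> g \<in> G2_set \<Longrightarrow> f \<otimes>\<^bsub>G2\<^esub> g = f \<circ> g"
  by (simp add: G2_def Perm_oct_mult G2_set_eq semilinear_aut_bij)

lemma G2_inv:
  assumes "f \<in> G2_set"
  shows "inv\<^bsub>G2\<^esub> f = inv_into UNIV f"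
proof -
  have "inv\<^bsub>G2\<^esub> f = inv\<^bsub>Perm_oct\<^esub> f"
    unfolding G2_def by (rule group.m_inv_consistent[OF group_BijGroup subgroup_G2_set assms])
  then show ?thesis
    using assms by (simp add: Perm_oct_inv G2_set_eq semilinear_aut_bij)
qed

lemma exists_G2_conj_in_sylow:
  fixes x :: "'k::{field, finite} oct \<Rightarrow> 'k oct"
  assumes "sylow_subgroup p R (G2 :: ('k oct \<Rightarrow> 'k oct) monoid)" "Factorial_Ring.prime p"
    and "x \<in> G2_set" "x [^]\<^bsub>G2\<^esub> p = id"
  shows "\<exists>g\<in>G2_set. g \<circ> x \<circ> inv_into UNIV g \<in> R"
proof -
  interpret G2: group "G2 :: ('k oct \<Rightarrow> 'k oct) monoid"
    by (rule group_G2)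
  have "finite (carrier (G2 :: ('k oct \<Rightarrow> 'k oct) monoid))"
    by (rule finite_subset[of _ "UNIV :: ('k oct \<Rightarrow> 'k oct) set"]) simp_all
  moreover have "x \<in> carrier G2" "x [^]\<^bsub>G2\<^esub> p = \<one>\<^bsub>G2\<^esub>"
    using assms(3,4) by (simp_all add: G2_one)
  ultimately obtain g where g: "g \<in> carrier G2" "g \<otimes>\<^bsub>G2\<^esub> x \<otimes>\<^bsub>G2\<^esub> inv\<^bsub>G2\<^esub> g \<in> R"
    using G2.exists_conj_in_sylow_subgroup[OF _ assms(1,2)] by blast
  have "g \<otimes>\<^bsub>G2\<^esub> x \<otimes>\<^bsub>G2\<^esub> inv\<^bsub>G2\<^esub> g = g \<circ> x \<circ> inv_into UNIV g"
    using g(1) assms(3) G2.m_closed[of g x] G2.inv_closed[of g] by (simp add: G2_mult G2_inv)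
  with g show ?thesis
    by auto
qed

lemma semilinear_aut_conj:
  assumes "semilinear_aut s a" "g \<in> G2_set"
  shows "semilinear_aut s (inv_into UNIV g \<circ> a \<circ> g)"
proof -
  have g: "semilinear_aut id g"
    using assms(2) by (simp add: G2_set_eq)
  then have "semilinear_aut id (inv_into UNIV g)"
    using semilinear_aut_inv_into[of id g] by (simp add: inv_id)
  then have "semilinear_aut (id \<circ> s \<circ> id) (inv_into UNIV g \<circ> a \<circ> g)"
    using assms(1) g by (intro semilinear_aut_comp)
  then show ?thesis
    by simp
qed

section \<open>SL_2 inside G_2\<close>

fun sl2_vec :: "'a::comm_ring_1 mat2 \<Rightarrow> 'a \<times> 'a \<times> 'a \<Rightarrow> 'a \<times> 'a \<times> 'a" where
  "sl2_vec (Mat2 a b c d) (v1, v2, v3) = (a * v1 + b * v2, c * v1 + d * v2, v3)"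

fun sl2_covec :: "'a::comm_ring_1 mat2 \<Rightarrow> 'a \<times> 'a \<times> 'a \<Rightarrow> 'a \<times> 'a \<times> 'a" where
  "sl2_covec (Mat2 a b c d) (w1, w2, w3) = (d * w1 - c * w2, - b * w1 + a * w2, w3)"

(* M acts on the vector part v and contragrediently on w (by the inverse transpose when
   det M = 1), which preserves the dot and cross products in Zorn's multiplication. *)
fun sl2_oct :: "'k::field mat2 \<Rightarrow> 'k oct \<Rightarrow> 'k oct" where
  "sl2_oct M (a, v, w, b) = (a, sl2_vec M v, sl2_covec M w, b)"

lemma sl2_oct_mult: "sl2_oct (A * B) = sl2_oct A \<circ> sl2_oct B"
proof
  fix x :: "'a oct"
  show "sl2_oct (A * B) x = (sl2_oct A \<circ> sl2_oct B) x"
    by (cases x rule: oct_cases; cases A; cases B) (simp add: algebra_simps)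
qed

lemma sl2_oct_one: "sl2_oct 1 = id"
proof
  fix x :: "'a oct"
  show "sl2_oct 1 x = id x"
    by (cases x rule: oct_cases) (simp add: one_mat2_def)
qed

lemma sl2_oct_adj_inverse:
  assumes "mat2_det M = 1"
  shows "sl2_oct M \<circ> sl2_oct (mat2_adj M) = id" "sl2_oct (mat2_adj M) \<circ> sl2_oct M = id"
  using assms by (simp_all add: sl2_oct_mult[symmetric] mat2_mult_adj sl2_oct_one)

lemma
  fixes M :: "'k::field mat2"
  assumes "mat2_det M = 1"
  shows v3_dot_sl2_vec_covec: "v3_dot (sl2_vec M v) (sl2_covec M w) = v3_dot v w"
    and v3_dot_sl2_covec_vec: "v3_dot (sl2_covec M w) (sl2_vec M v) = v3_dot w v"
    and v3_cross_sl2_vec: "v3_cross (sl2_vec M v) (sl2_vec M u) = sl2_covec M (v3_cross v u)"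
    and v3_cross_sl2_covec: "v3_cross (sl2_covec M v) (sl2_covec M u) = sl2_vec M (v3_cross v u)"
proof -
  obtain a b c d where M: "M = Mat2 a b c d" by (cases M)
  obtain v1 v2 v3 w1 w2 w3 u1 u2 u3 where vwu: "v = (v1, v2, v3)" "w = (w1, w2, w3)" "u = (u1, u2, u3)"
    by (metis prod_cases3)
  have "a * d - b * c = 1"
    using assms by (simp add: M)
  then show "v3_dot (sl2_vec M v) (sl2_covec M w) = v3_dot v w"
    "v3_dot (sl2_covec M w) (sl2_vec M v) = v3_dot w v"
    "v3_cross (sl2_vec M v) (sl2_vec M u) = sl2_covec M (v3_cross v u)"
    "v3_cross (sl2_covec M v) (sl2_covec M u) = sl2_vec M (v3_cross v u)"
    by (simp_all add: M vwu) Groebner_Basis.algebra+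
qed

lemma sl2_vec_add: "sl2_vec M (v3_add u v) = v3_add (sl2_vec M u) (sl2_vec M v)"
  and sl2_covec_add: "sl2_covec M (v3_add u v) = v3_add (sl2_covec M u) (sl2_covec M v)"
  and sl2_vec_smult: "sl2_vec M (v3_smult c u) = v3_smult c (sl2_vec M u)"
  and sl2_covec_smult: "sl2_covec M (v3_smult c u) = v3_smult c (sl2_covec M u)"
  by (cases M; cases u rule: prod_cases3; cases v rule: prod_cases3; simp add: algebra_simps)+

lemma sl2_oct_in_G2:
  assumes "mat2_det M = 1"
  shows "sl2_oct M \<in> G2_set"
proof -
  have "bij (sl2_oct M)"
    using sl2_oct_adj_inverse[OF assms] o_bij by blast
  moreover have "sl2_oct M (oct_add x y) = oct_add (sl2_oct M x) (sl2_oct M y)"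
    and "sl2_oct M (oct_smult c x) = oct_smult (id c) (sl2_oct M x)"
    and "sl2_oct M (oct_mult x y) = oct_mult (sl2_oct M x) (sl2_oct M y)" for c x y
    by (cases x; cases y; simp add: sl2_vec_add sl2_covec_add sl2_vec_smult sl2_covec_smult
        v3_dot_sl2_vec_covec v3_dot_sl2_covec_vec v3_cross_sl2_vec v3_cross_sl2_covec assms)+
  ultimately have "semilinear_aut id (sl2_oct M)"
    by (rule semilinear_autI)
  then show ?thesis
    by (simp add: G2_set_eq)
qed

lemma sl2_oct_power_G2:
  assumes "mat2_det M = 1"
  shows "sl2_oct M [^]\<^bsub>G2\<^esub> (n::nat) = sl2_oct (M ^ n)"
proof (induction n)
  case 0
  then show ?case by (simp add: G2_one sl2_oct_one)
next
  case (Suc n)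
  have "mat2_det (M ^ n) = 1"
    using assms by (simp add: mat2_det_power)
  moreover have "sl2_oct (M ^ Suc n) = sl2_oct (M ^ n) \<circ> sl2_oct M"
    by (simp only: power_Suc2 sl2_oct_mult)
  ultimately show ?case
    using Suc assms by (simp add: G2_mult sl2_oct_in_G2)
qed

lemma sl2_oct_add_adj_eigenvalue:
  assumes "oct_add (sl2_oct M z) (sl2_oct (mat2_adj M) z) = oct_smult e z" "z \<noteq> oct_zero"
  shows "e = 2 \<or> e = mat2_trace M"
proof (rule ccontr)
  assume e: "\<not> (e = 2 \<or> e = mat2_trace M)"
  obtain a v1 v2 v3 w1 w2 w3 b where z: "z = (a, (v1, v2, v3), (w1, w2, w3), b)"
    by (rule oct_cases)
  have "(2 - e) * a = 0" "(2 - e) * v3 = 0" "(2 - e) * w3 = 0" "(2 - e) * b = 0"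
    "(mat2_trace M - e) * v1 = 0" "(mat2_trace M - e) * v2 = 0"
    "(mat2_trace M - e) * w1 = 0" "(mat2_trace M - e) * w2 = 0"
    using assms(1) by (cases M; simp add: z algebra_simps mult_2)+
  then have "z = oct_zero"
    using e by (auto simp: z oct_zero_def)
  with assms(2) show False ..
qed

lemma commute_with_inverse:
  assumes "a \<circ> f = f \<circ> a" "f \<circ> g = id" "g \<circ> f = id"
  shows "a \<circ> g = g \<circ> a"
proof -
  have "a (g x) = g (a x)" for x
  proof -
    have "a (g x) = g (f (a (g x)))"
      using fun_cong[OF assms(3)] by simp
    also have "\<dots> = g (a (f (g x)))"
      using fun_cong[OF assms(1)] by simp
    also have "\<dots> = g (a x)"
      using fun_cong[OF assms(2)] by simp
    finally show ?thesis .
  qed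
  then show ?thesis
    by auto
qed

lemma commute_conj:
  assumes "bij g" "a \<circ> (g \<circ> x \<circ> inv_into UNIV g) = (g \<circ> x \<circ> inv_into UNIV g) \<circ> a"
  shows "(inv_into UNIV g \<circ> a \<circ> g) \<circ> x = x \<circ> (inv_into UNIV g \<circ> a \<circ> g)"
proof
  fix z
  have "a (g (x z)) = g (x (inv_into UNIV g (a (g z))))"
    using fun_cong[OF assms(2), of "g z"] assms(1) by (simp add: bij_is_inj)
  then show "((inv_into UNIV g \<circ> a \<circ> g) \<circ> x) z = (x \<circ> (inv_into UNIV g \<circ> a \<circ> g)) z"
    using assms(1) by (simp add: bij_is_inj)
qed

(* T = sl2_oct M + sl2_oct M^-1 acts as tr M on p and has no eigenvalues other than tr M and 2,
   while T (a p) = s (tr M) a p because a commutes with T. *)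
lemma field_aut_fixes_trace_if_commutes:
  assumes "semilinear_aut s a" "field_aut s" "mat2_det M = 1" "mat2_trace M \<noteq> 2"
    and "a \<circ> sl2_oct M = sl2_oct M \<circ> a"
  shows "s (mat2_trace M) = mat2_trace M"
proof -
  define c where "c = mat2_trace M"
  define T where "T z = oct_add (sl2_oct M z) (sl2_oct (mat2_adj M) z)" for z
  have adj_commute: "a \<circ> sl2_oct (mat2_adj M) = sl2_oct (mat2_adj M) \<circ> a"
    using assms(5) sl2_oct_adj_inverse[OF assms(3)] by (rule commute_with_inverse)
  have T_commute: "a (T z) = T (a z)" for z
    using fun_cong[OF assms(5), of z] fun_cong[OF adj_commute, of z]
    by (simp only: T_def semilinear_aut_add[OF assms(1)] comp_apply)
  define p :: "'a oct" where "p = (0, (1, 0, 0), (0, 0, 0), 0)"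
  have "T p = oct_smult c p"
    by (cases M) (simp add: T_def p_def c_def)
  then have "T (a p) = oct_smult (s c) (a p)"
    using T_commute semilinear_aut_smult[OF assms(1)] by metis
  moreover have "a p \<noteq> oct_zero"
    using semilinear_aut_zero[OF assms(1,2)] bij_is_inj[OF semilinear_aut_bij[OF assms(1)]]
    by (metis injD p_def oct_zero_def zero_neq_one prod.inject)
  ultimately have "s c = 2 \<or> s c = c"
    unfolding T_def c_def by (rule sl2_oct_add_adj_eigenvalue)
  moreover have "s c \<noteq> 2"
  proof
    assume "s c = 2"
    then have "s c = s 2"
      using field_aut_of_nat[OF assms(2), of 2] by simp
    then have "c = 2"
      using bij_is_inj[OF field_aut_bij[OF assms(2)]] by (simp add: inj_eq)
    with assms(4) show False
      by (simp add: c_def)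
  qed
  ultimately show ?thesis
    by (simp add: c_def)
qed

section \<open>The centraliser of R\<close>

lemma A0hat_elem_commuting_with_conj_sl2_oct_in_G2:
  fixes M :: "'k::{field, finite} mat2"
  assumes a: "a \<in> A0hat" and g: "g \<in> G2_set"
    and commute: "a \<circ> (g \<circ> sl2_oct M \<circ> inv_into UNIV g) = (g \<circ> sl2_oct M \<circ> inv_into UNIV g) \<circ> a"
    and card: "card (UNIV :: 'k set) = 3 ^ f"
    and M: "mat2_det M = 1" "M ^ r = 1" "M \<noteq> 1" "mat2_trace M ^ 2 \<noteq> 4"
    and r: "Factorial_Ring.prime r" "ord r 3 = 2 * f"
  shows "a \<in> G2_set"
proof -
  obtain s where s: "field_aut s" "semilinear_aut s a"
    using A0hat_semilinear_aut[OF a] by blast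
  have "s (mat2_trace M) = mat2_trace M"
  proof (rule field_aut_fixes_trace_if_commutes)
    show "semilinear_aut s (inv_into UNIV g \<circ> a \<circ> g)"
      using s(2) g by (rule semilinear_aut_conj)
    show "(inv_into UNIV g \<circ> a \<circ> g) \<circ> sl2_oct M = sl2_oct M \<circ> (inv_into UNIV g \<circ> a \<circ> g)"
      using g commute by (intro commute_conj) (simp_all add: G2_set_eq semilinear_aut_bij)
  qed (use s(1) M(1,4) in auto)
  then have "s = id"
    using field_aut_eq_id_if_fixes_trace s(1) card M r by blast
  with s(2) show ?thesis
    by (simp add: G2_set_eq)
qed

theorem lemma5p8:
  fixes K_witness :: "'k::{field, finite} itself"
    and f :: nat and q :: nat and r :: nat
    and \<sigma> :: "'k \<Rightarrow> 'k"
    and R :: "('k oct \<Rightarrow> 'k oct) set"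
  assumes "q = 3 ^ f" and "f > 1" and "card (UNIV :: 'k set) = q"
    and "field_aut \<sigma>" and "Factorial_Ring.prime (LEAST n. n > 0 \<and> \<sigma> ^^ n = id)"
    and "Factorial_Ring.prime r" and "r dvd q + 1" and "ord r 3 = 2 * f"
    and "sylow_subgroup r R (G2 :: ('k oct \<Rightarrow> 'k oct) monoid)"
  shows "centraliser_in (A0hat :: ('k oct \<Rightarrow> 'k oct) set) R \<subseteq> G2_set"
proof -
  have card: "card (UNIV :: 'k set) = 3 ^ f"
    using assms(1,3) by simp
  have three: "(3::'k) = 0"
    using card by (rule three_eq_0_if_card_eq_3_power)
  have "r > 3"
    using zsigmondy_prime_gt_3 assms(1,2,6-8) by simp
  moreover have "r dvd (q + 1) * (q - 1)"
    using assms(7) by (rule dvd_mult2)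
  then have "r dvd q ^ 2 - 1"
    by (simp add: power2_eq_square diff_mult_distrib2 algebra_simps)
  ultimately obtain M :: "'k mat2" where M: "mat2_det M = 1" "M ^ r = 1" "M \<noteq> 1"
    using exists_mat2_det_1_of_prime_order[OF assms(3) two_ne_0_if_three_eq_0[OF three] assms(6)]
      coprime_pred_if_dvd_succ[OF assms(6) _ assms(7)] by auto
  have trace: "mat2_trace M ^ 2 \<noteq> 4"
    using three M assms(6) \<open>r > 3\<close> by (rule mat2_trace_square_ne_4)
  obtain g where g: "g \<in> G2_set" "g \<circ> sl2_oct M \<circ> inv_into UNIV g \<in> R"
    using exists_G2_conj_in_sylow[OF assms(9,6) sl2_oct_in_G2[OF M(1)]] M(1,2)
    by (auto simp: sl2_oct_power_G2 sl2_oct_one)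
  show ?thesis
  proof
    fix a assume "a \<in> centraliser_in A0hat R"
    with g(2) have "a \<in> A0hat"
      "a \<circ> (g \<circ> sl2_oct M \<circ> inv_into UNIV g) = (g \<circ> sl2_oct M \<circ> inv_into UNIV g) \<circ> a"
      by (auto simp: centraliser_in_def)
    then show "a \<in> G2_set"
      by (rule A0hat_elem_commuting_with_conj_sl2_oct_in_G2[OF _ g(1) _ card M trace assms(6,8)])
  qed
qed

end
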